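(* Fix parameters $\mu_e>0$ and $\sigma^2>0$. Consider vanilla federation, in which a player $j$ belonging to a coalition $C$ of players (player $i$ having $n_i>0$ samples) experiences error $$err_j(C)=\frac{\mu_e}{\sum_{i\in C}n_i}+\sigma^2\cdot\frac{\sum_{i\in C,i\neq j}n_i^2+\left(\sum_{i\in C,i\neq j}n_i\right)^2}{\left(\sum_{i\in C}n_i\right)^2}.$$ Then: (1) For any coalition $C$ and any two players $s,l\in C$ with $n_s\le n_l$, we have $err_s(C)\ge err_l(C)$, with strict inequality if $n_s<n_l$. (2) For any $c>0$, any coalition $C$ in which the largest player has at most $c\cdot\frac{\mu_e}{\sigma^2}$ samples satisfies $(2c+1)$-egalitarian fairness, i.e. $\frac{err_i(C)}{err_j(C)}\le 2c+1$ for all $i,j\in C$. (3) This bound is tight up to an additive $\epsilon$: for every $c>0$ and every $\epsilon>0$ there exist parameters $\mu_e,\sigma^2>0$ and sample sizes $n_s\ge 1$, $n_l\le c\cdot\frac{\mu_e}{\sigma^2}$ such that for the two-player coalition $\{s,l\}$, $\frac{err_s(\{s,l\})}{err_l(\{s,l\})}\ge 2c+1-\epsilon$.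
   Context: Model of federated learning (mean estimation): each player $i$ has $n_i$ samples drawn i.i.d. from a distribution with mean $\theta_i$ and variance $\epsilon_i$, where $(\theta_i,\epsilon_i)$ are drawn from a common distribution; $\mu_e=\mathbb{E}[\epsilon_i]$ is the average sampling noise and $\sigma^2=\mathrm{Var}(\theta_i)$ the variance of the true means. A coalition $C$ using vanilla (uniform) federation uses the sample-weighted average of the local mean estimates as a common model; the resulting expected squared error of player $j$ is the formula given in the claim. A coalition $C$ satisfies $\lambda$-egalitarian fairness (for a constant $\lambda\ge1$) if $err_i(C)/err_j(C)\le\lambda$ for all players $i,j$ in $C$. *)

theory Defs
  imports Complex_Main
begin

definition err :: "real \<Rightarrow> real \<Rightarrow> ('a \<Rightarrow> nat) \<Rightarrow> 'a set \<Rightarrow> 'a \<Rightarrow> real" where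
  "err mu sig2 n C j =
     mu / (\<Sum>i\<in>C. real (n i))
     + sig2 * ((\<Sum>i\<in>C - {j}. (real (n i))\<^sup>2) + (\<Sum>i\<in>C - {j}. real (n i))\<^sup>2)
             / (\<Sum>i\<in>C. real (n i))\<^sup>2"

definition egal_fair :: "real \<Rightarrow> real \<Rightarrow> real \<Rightarrow> ('a \<Rightarrow> nat) \<Rightarrow> 'a set \<Rightarrow> bool" where
  "egal_fair lam mu sig2 n C \<longleftrightarrow>
     (\<forall>i\<in>C. \<forall>j\<in>C. err mu sig2 n C i / err mu sig2 n C j \<le> lam)"

end

theory Submission
  imports Defs "HOL-Real_Asymp.Real_Asymp"
begin

(* With N the total number of samples of a coalition and Q the sum of the squared sample
   sizes, removing player j from the two sums turns err_j into
   mu / N + sig2 * (Q + N^2) / N^2 - 2 * sig2 * n_j / N: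
   a quantity common to all members minus a term proportional to n_j. So larger players
   suffer less, and two errors differ by at most 2 * sig2 * n_max / N <= 2 * c * mu / N,
   while every error is at least the noise term mu / N; this gives the factor 2c + 1.
   For tightness, a player with one sample faces a player with m samples at mu = m / c,
   sig2 = 1: the ratio of their errors tends to 2c + 1 as m grows. *)

lemma err_diff:
  assumes "finite C" "i \<in> C" "j \<in> C"
  shows "err mu sig2 n C i - err mu sig2 n C j
           = 2 * sig2 * (real (n j) - real (n i)) / (\<Sum>k\<in>C. real (n k))"
proof -
  define N where "N = (\<Sum>k\<in>C. real (n k))"
  define Q where "Q = (\<Sum>k\<in>C. (real (n k))\<^sup>2)"
  have "err mu sig2 n C k = mu / N + sig2 * (Q - (real (n k))\<^sup>2 + (N - real (n k))\<^sup>2) / N\<^sup>2"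
    if "k \<in> C" for k
    using assms(1) that by (simp add: err_def sum_diff1 N_def Q_def)
  then have "err mu sig2 n C i - err mu sig2 n C j
               = sig2 * (2 * N * (real (n j) - real (n i))) / N\<^sup>2"
    using assms(2,3) by (simp add: diff_divide_distrib [symmetric] power2_eq_square algebra_simps)
  then show ?thesis
    by (cases "N = 0") (simp_all add: N_def power2_eq_square)
qed

lemma err_ge_noise:
  assumes "sig2 \<ge> 0"
  shows "mu / (\<Sum>k\<in>C. real (n k)) \<le> err mu sig2 n C j"
proof -
  have "0 \<le> sig2 * ((\<Sum>i\<in>C - {j}. (real (n i))\<^sup>2) + (\<Sum>i\<in>C - {j}. real (n i))\<^sup>2)
               / (\<Sum>i\<in>C. real (n i))\<^sup>2"
    using assms by (intro divide_nonneg_nonneg mult_nonneg_nonneg add_nonneg_nonneg sum_nonneg) auto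
  then show ?thesis unfolding err_def by linarith
qed

lemma err_nonneg:
  assumes "mu \<ge> 0" "sig2 \<ge> 0"
  shows "err mu sig2 n C j \<ge> 0"
proof -
  have "mu / (\<Sum>k\<in>C. real (n k)) \<ge> 0"
    using assms(1) by (simp add: sum_nonneg)
  with err_ge_noise [OF assms(2), of mu n C j] show ?thesis by linarith
qed

lemma err_le_err_if_le:
  assumes "finite C" "s \<in> C" "l \<in> C" "sig2 \<ge> 0" "n s \<le> n l"
  shows "err mu sig2 n C l \<le> err mu sig2 n C s"
proof -
  have "2 * sig2 * (real (n s) - real (n l)) / (\<Sum>k\<in>C. real (n k)) \<le> 0"
    using assms(4,5) by (intro divide_nonpos_nonneg mult_nonneg_nonpos sum_nonneg) auto
  with err_diff [OF assms(1,3,2), of mu sig2 n] show ?thesis by linarith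
qed

lemma err_less_err_if_less:
  assumes "finite C" "s \<in> C" "l \<in> C" "sig2 > 0" "n s < n l"
  shows "err mu sig2 n C l < err mu sig2 n C s"
proof -
  have "real (n l) \<le> (\<Sum>k\<in>C. real (n k))"
    using assms(1,3) by (intro member_le_sum) auto
  with assms(5) have "(\<Sum>k\<in>C. real (n k)) > 0" by linarith
  then have "2 * sig2 * (real (n s) - real (n l)) / (\<Sum>k\<in>C. real (n k)) < 0"
    using assms(4,5) by (intro divide_neg_pos mult_pos_neg) auto
  with err_diff [OF assms(1,3,2), of mu sig2 n] show ?thesis by linarith
qed

lemma err_le_mult_err:
  assumes "finite C" "i \<in> C" "j \<in> C" "sig2 \<ge> 0" "c \<ge> 0"
    and bounded: "sig2 * real (n j) \<le> c * mu"
  shows "err mu sig2 n C i \<le> (2 * c + 1) * err mu sig2 n C j"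
proof -
  define N where "N = (\<Sum>k\<in>C. real (n k))"
  have "N \<ge> 0" unfolding N_def by (simp add: sum_nonneg)
  have "err mu sig2 n C i - err mu sig2 n C j = 2 * sig2 * (real (n j) - real (n i)) / N"
    using err_diff [OF assms(1-3)] by (simp add: N_def)
  also have "\<dots> \<le> 2 * c * mu / N"
  proof (rule divide_right_mono [OF _ \<open>N \<ge> 0\<close>])
    have "sig2 * real (n i) \<ge> 0" using \<open>sig2 \<ge> 0\<close> by simp
    with bounded show "2 * sig2 * (real (n j) - real (n i)) \<le> 2 * c * mu"
      by (simp add: right_diff_distrib)
  qed
  also have "\<dots> \<le> 2 * c * err mu sig2 n C j"
    using mult_left_mono [OF err_ge_noise [OF \<open>sig2 \<ge> 0\<close>], of "2 * c" mu n C j] \<open>c \<ge> 0\<close>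
    by (simp add: N_def)
  finally show ?thesis by (simp add: algebra_simps)
qed

lemma egal_fair_if_sizes_bounded:
  assumes "finite C" "mu \<ge> 0" "sig2 \<ge> 0" "c \<ge> 0"
    and bounded: "\<forall>i\<in>C. sig2 * real (n i) \<le> c * mu"
  shows "egal_fair (2 * c + 1) mu sig2 n C"
  unfolding egal_fair_def
proof (intro ballI)
  fix i j assume "i \<in> C" "j \<in> C"
  have "err mu sig2 n C i \<le> (2 * c + 1) * err mu sig2 n C j"
    using bounded \<open>i \<in> C\<close> \<open>j \<in> C\<close> by (intro err_le_mult_err [OF assms(1)] assms(3,4)) auto
  moreover have "err mu sig2 n C j \<ge> 0"
    using err_nonneg [OF assms(2,3)] .
  moreover have "2 * c + 1 \<ge> 0" using \<open>c \<ge> 0\<close> by simp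
  ultimately show "err mu sig2 n C i / err mu sig2 n C j \<le> 2 * c + 1"
    by (cases "err mu sig2 n C j = 0") (simp_all add: divide_le_eq)
qed

lemma err_pair:
  assumes "s \<noteq> l"
  shows "err mu sig2 n {s, l} s
           = mu / (real (n s) + real (n l)) + 2 * sig2 * (real (n l))\<^sup>2 / (real (n s) + real (n l))\<^sup>2"
proof -
  have "{s, l} - {s} = {l}" using assms by auto
  then show ?thesis using assms by (simp add: err_def)
qed

lemma err_ratio_small_large_tendsto:
  fixes c :: real
  assumes "c > 0"
  defines "n \<equiv> \<lambda>m i. if i = (0::nat) then 1 else m"
  shows "((\<lambda>m. err (m / c) 1 (n m) {0, 1} 0 / err (m / c) 1 (n m) {0, 1} 1) \<longlongrightarrow> 2 * c + 1)
           sequentially"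
proof -
  have small: "err (m / c) 1 (n m) {0, 1} 0
                 = (real m / c) / (real m + 1) + 2 * (real m)\<^sup>2 / (real m + 1)\<^sup>2" for m
    using err_pair [of 0 1 "m / c" 1 "n m"] by (simp add: n_def add.commute)
  have large: "err (m / c) 1 (n m) {0, 1} 1 = (real m / c) / (real m + 1) + 2 / (real m + 1)\<^sup>2" for m
    using err_pair [of 1 0 "m / c" 1 "n m"] by (simp add: n_def insert_commute)
  have "((\<lambda>m. ((real m / c) / (real m + 1) + 2 * (real m)\<^sup>2 / (real m + 1)\<^sup>2)
                   / ((real m / c) / (real m + 1) + 2 / (real m + 1)\<^sup>2)) \<longlongrightarrow> (inverse c + 2) * c) sequentially"
    using assms(1) by real_asymp
  moreover have "(inverse c + 2) * c = 2 * c + 1"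
    using assms(1) by (simp add: field_simps)
  ultimately show ?thesis
    unfolding small large by (simp only:)
qed

theorem theorem4p1:
  fixes mu sig2 :: real and n :: "'a \<Rightarrow> nat"
  assumes mu_pos: "mu > 0" and sig_pos: "sig2 > 0"
  shows
    "(\<forall>(C::'a set) s l. finite C \<and> (\<forall>i\<in>C. n i > 0) \<and> s \<in> C \<and> l \<in> C \<and> n s \<le> n l \<longrightarrow>
        err mu sig2 n C s \<ge> err mu sig2 n C l \<and>
        (n s < n l \<longrightarrow> err mu sig2 n C s > err mu sig2 n C l))
   \<and> (\<forall>(c::real) (C::'a set). c > 0 \<and> finite C \<and> C \<noteq> {} \<and> (\<forall>i\<in>C. n i > 0)
        \<and> (\<forall>i\<in>C. real (n i) \<le> c * mu / sig2) \<longrightarrow> egal_fair (2 * c + 1) mu sig2 n C)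
   \<and> (\<forall>(c::real) (eps::real). c > 0 \<and> eps > 0 \<longrightarrow>
        (\<exists>mu' sig2' (n'::nat \<Rightarrow> nat) (s::nat) (l::nat).
           mu' > 0 \<and> sig2' > 0 \<and> s \<noteq> l \<and> n' s \<ge> 1 \<and> n' l \<ge> 1 \<and>
           real (n' l) \<le> c * mu' / sig2' \<and> real (n' s) \<le> c * mu' / sig2' \<and>
           err mu' sig2' n' {s, l} s / err mu' sig2' n' {s, l} l \<ge> 2 * c + 1 - eps))"
proof (intro conjI allI impI)
  fix C :: "'a set" and s l
  assume "finite C \<and> (\<forall>i\<in>C. n i > 0) \<and> s \<in> C \<and> l \<in> C \<and> n s \<le> n l"
  with sig_pos show "err mu sig2 n C l \<le> err mu sig2 n C s"
    by (intro err_le_err_if_le) auto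
next
  fix C :: "'a set" and s l
  assume "finite C \<and> (\<forall>i\<in>C. n i > 0) \<and> s \<in> C \<and> l \<in> C \<and> n s \<le> n l" and "n s < n l"
  with sig_pos show "err mu sig2 n C l < err mu sig2 n C s"
    by (intro err_less_err_if_less) auto
next
  fix c :: real and C :: "'a set"
  assume H: "c > 0 \<and> finite C \<and> C \<noteq> {} \<and> (\<forall>i\<in>C. n i > 0)
               \<and> (\<forall>i\<in>C. real (n i) \<le> c * mu / sig2)"
  with sig_pos have "\<forall>i\<in>C. sig2 * real (n i) \<le> c * mu"
    by (simp add: pos_le_divide_eq mult.commute)
  with H mu_pos sig_pos show "egal_fair (2 * c + 1) mu sig2 n C"
    by (intro egal_fair_if_sizes_bounded) auto
next
  fix c eps :: real
  assume H: "c > 0 \<and> eps > 0"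
  let ?n = "\<lambda>m i. if i = (0::nat) then 1 else m"
  have "\<forall>\<^sub>F m in sequentially.
          2 * c + 1 - eps < err (m / c) 1 (?n m) {0, 1} 0 / err (m / c) 1 (?n m) {0, 1} 1"
    using H by (intro order_tendstoD(1) [OF err_ratio_small_large_tendsto]) auto
  moreover have "\<forall>\<^sub>F m in sequentially. m \<ge> (1::nat)"
    by (rule eventually_ge_at_top)
  ultimately obtain m where m: "m \<ge> 1"
    and ratio: "2 * c + 1 - eps < err (m / c) 1 (?n m) {0, 1} 0 / err (m / c) 1 (?n m) {0, 1} 1"
    using eventually_happens' [OF sequentially_bot] eventually_conj by blast
  show "\<exists>mu' sig2' (n'::nat \<Rightarrow> nat) (s::nat) (l::nat).
           mu' > 0 \<and> sig2' > 0 \<and> s \<noteq> l \<and> n' s \<ge> 1 \<and> n' l \<ge> 1 \<and>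
           real (n' l) \<le> c * mu' / sig2' \<and> real (n' s) \<le> c * mu' / sig2' \<and>
           err mu' sig2' n' {s, l} s / err mu' sig2' n' {s, l} l \<ge> 2 * c + 1 - eps"
    using H m ratio
    by (intro exI [of _ "m / c"] exI [of _ 1] exI [of _ "?n m"] exI [of _ 0] exI [of _ 1]) auto
qed

end
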